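(* Let $n\ge 3$, let $A=(a_{ij})_{1\le i,j\le n}$ be a real $n\times n$ matrix, let $\pi$ be uniformly distributed over the symmetric group $S_n$, and let $Y=\sum_{i=1}^n a_{i\pi(i)}$. Set $a_{i\cdot}=\frac1n\sum_{j=1}^n a_{ij}$, $a_{\cdot j}=\frac1n\sum_{i=1}^n a_{ij}$, $a_{\cdot\cdot}=\frac1{n^2}\sum_{i,j=1}^n a_{ij}$, $\mu_A=na_{\cdot\cdot}$ (the mean of $Y$), $$\sigma_A^2=\frac{1}{n-1}\sum_{1\le i,j\le n}(a_{ij}-a_{i\cdot}-a_{\cdot j}+a_{\cdot\cdot})^2$$ (the variance of $Y$), assumed nonzero, $\|a\|=\max_{1\le i,j\le n}|a_{ij}-a_{i\cdot}|$ and $c=8\|a\|$. Then for every $t\ge 0$, $$\max\{\mathbb{P}(Y-\mu_A\ge t),\mathbb{P}(Y-\mu_A\le -t)\}\le \exp\left(-\frac{t^2}{2(\sigma_A^2+ct)}\right)\quad\text{and}\quad \max\{\mathbb{P}(Y-\mu_A\ge t),\mathbb{P}(Y-\mu_A\le -t)\}\le \exp\left(-\frac{t^2}{10\sigma_A^2/3+ct}\right),$$ and for every $t>e$, $$\max\{\mathbb{P}(Y-\mu_A\ge t),\mathbb{P}(Y-\mu_A\le -t)\}\le \exp\left(-\frac{t}{c}\left(\log t-\log\log t-\frac{\sigma_A^2}{c}\right)\right)\le\exp\left(-\frac{t}{2c}\left(\log t-\frac{2\sigma_A^2}{c}\right)\right).$$ *)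

theory Defs
  imports "HOL-Probability.Probability"
begin

definition row_mean :: "nat \<Rightarrow> (nat \<Rightarrow> nat \<Rightarrow> real) \<Rightarrow> nat \<Rightarrow> real" where
  "row_mean n a i = (\<Sum>j=1..n. a i j) / real n"

definition col_mean :: "nat \<Rightarrow> (nat \<Rightarrow> nat \<Rightarrow> real) \<Rightarrow> nat \<Rightarrow> real" where
  "col_mean n a j = (\<Sum>i=1..n. a i j) / real n"

definition tot_mean :: "nat \<Rightarrow> (nat \<Rightarrow> nat \<Rightarrow> real) \<Rightarrow> real" where
  "tot_mean n a = (\<Sum>i=1..n. \<Sum>j=1..n. a i j) / (real n)^2"

definition mu_A :: "nat \<Rightarrow> (nat \<Rightarrow> nat \<Rightarrow> real) \<Rightarrow> real" where
  "mu_A n a = real n * tot_mean n a"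

definition sigma2_A :: "nat \<Rightarrow> (nat \<Rightarrow> nat \<Rightarrow> real) \<Rightarrow> real" where
  "sigma2_A n a = (\<Sum>i=1..n. \<Sum>j=1..n.
      (a i j - row_mean n a i - col_mean n a j + tot_mean n a)^2) / (real n - 1)"

definition norm_A :: "nat \<Rightarrow> (nat \<Rightarrow> nat \<Rightarrow> real) \<Rightarrow> real" where
  "norm_A n a = Max {\<bar>a i j - row_mean n a i\<bar> | i j. i \<in> {1..n} \<and> j \<in> {1..n}}"

definition perm_stat :: "nat \<Rightarrow> (nat \<Rightarrow> nat \<Rightarrow> real) \<Rightarrow> (nat \<Rightarrow> nat) \<Rightarrow> real" where
  "perm_stat n a \<pi> = (\<Sum>i=1..n. a i (\<pi> i))"

definition unif_perm :: "nat \<Rightarrow> (nat \<Rightarrow> nat) pmf" where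
  "unif_perm n = pmf_of_set {\<pi>. \<pi> permutes {1..n}}"

end

theory Submission
  imports Defs
begin

text \<open>
  Write \<open>W(\<pi>) = Y - \<mu>\<^sub>A\<close> and \<open>Z(\<theta>) = \<Sum>\<^sub>\<pi> e\<^bsup>\<theta>W(\<pi>)\<^esup>\<close>. Exchanging the values of \<open>\<pi>\<close> at two
  positions \<open>i, j\<close> lowers \<open>Y\<close> by a swap gain \<open>G\<^sub>i\<^sub>j\<close>, and \<open>2nW = \<Sum>\<^sub>i\<^sub>j G\<^sub>i\<^sub>j\<close>. Pairing \<open>\<pi>\<close>
  with \<open>\<pi> \<circ> (i j)\<close> and using \<open>u(e\<^sup>u - 1) \<le> u\<^sup>2(e\<^sup>u + 1)/2\<close> bounds \<open>\<Sum>\<^sub>\<pi> G\<^sub>i\<^sub>j e\<^bsup>\<theta>W\<^esup>\<close> by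
  \<open>\<theta>/2 \<Sum>\<^sub>\<pi> G\<^sub>i\<^sub>j\<^sup>2 e\<^bsup>\<theta>W\<^esup>\<close>. Splitting the permutations according to \<open>(\<pi> i, \<pi> j)\<close>, any two
  fibres are matched by composing with a permutation moving four points, which changes \<open>Y\<close>
  by at most \<open>c = 8\<parallel>a\<parallel>\<close>; so each fibre carries at most \<open>e\<^bsup>c\<theta>\<^esup>/(n(n-1))\<close> of \<open>Z\<close>, and
  averaging \<open>G\<^sub>i\<^sub>j\<^sup>2\<close> over all \<open>i, j, k, l\<close> produces \<open>\<sigma>\<^sub>A\<^sup>2\<close>. Hence
  \<open>Z'(\<theta>) \<le> \<sigma>\<^sub>A\<^sup>2 \<theta> e\<^bsup>c\<theta>\<^esup> Z(\<theta>)\<close>, which integrates to \<open>Z(\<theta>) \<le> n! exp (\<sigma>\<^sub>A\<^sup>2 \<phi>(c\<theta>)/c\<^sup>2)\<close> with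
  \<open>\<phi>(x) = e\<^sup>x(x - 1) + 1\<close>. Chernoff's bound with three choices of \<open>\<theta>\<close> gives the three
  estimates, and the lower tail is the upper tail for \<open>-A\<close>.
\<close>

section \<open>Elementary inequalities\<close>

definition phi :: "real \<Rightarrow> real" where
  "phi x = exp x * (x - 1) + 1"

lemma DERIV_phi: "DERIV phi x :> x * exp x"
  unfolding phi_def[abs_def] by (auto intro!: derivative_eq_intros simp: algebra_simps)

lemma phi_0 [simp]: "phi 0 = 0"
  by (simp add: phi_def)

lemma one_minus_mult_exp_le: "(1 - y) * exp y \<le> (1::real)"
  using mult_right_mono[OF exp_ge_add_one_self[of "- y"], of "exp y"] by (simp add: exp_minus)

lemma exp_le_inverse_one_minus:
  fixes y :: real
  assumes "y < 1"
  shows "exp y \<le> 1 / (1 - y)"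
  using one_minus_mult_exp_le[of y] assms by (simp add: pos_le_divide_eq mult.commute)

lemma phi_le_Bernstein:
  assumes "0 \<le> x" "x < 1"
  shows "phi x \<le> x\<^sup>2 / (2 * (1 - x))"
proof -
  let ?f = "\<lambda>x. x\<^sup>2 / (2 * (1 - x)) - phi x"
  have "?f 0 \<le> ?f x"
  proof (rule DERIV_nonneg_imp_nondecreasing[OF assms(1)])
    fix y assume y: "0 \<le> y" "y \<le> x"
    with assms have "y < 1" by simp
    have "DERIV (\<lambda>x. x\<^sup>2 / (2 * (1 - x))) y :> y * (2 - y) / (2 * (1 - y)\<^sup>2)"
    proof (rule DERIV_cong)
      show "DERIV (\<lambda>x. x\<^sup>2 / (2 * (1 - x))) y :> (2 * y * (2 * (1 - y)) - y\<^sup>2 * (- 2)) / (2 * (1 - y))\<^sup>2"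
        using \<open>y < 1\<close> by (auto intro!: derivative_eq_intros simp: power2_eq_square)
    qed (simp add: power_mult_distrib field_split_simps, simp add: algebra_simps power2_eq_square)
    then have "DERIV ?f y :> y * (2 - y) / (2 * (1 - y)\<^sup>2) - y * exp y"
      by (intro derivative_intros DERIV_phi)
    moreover have "y * exp y \<le> y * (2 - y) / (2 * (1 - y)\<^sup>2)"
    proof -
      have "y * exp y \<le> y / (1 - y)"
        using mult_left_mono[OF exp_le_inverse_one_minus[OF \<open>y < 1\<close>] y(1)] by simp
      also have "\<dots> = 2 * y * (1 - y) / (2 * (1 - y)\<^sup>2)"
        using \<open>y < 1\<close> by (simp add: power2_eq_square)
      also have "\<dots> \<le> y * (2 - y) / (2 * (1 - y)\<^sup>2)"
        using y by (intro divide_right_mono) (auto simp: algebra_simps)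
      finally show ?thesis .
    qed
    ultimately show "\<exists>d. DERIV ?f y :> d \<and> 0 \<le> d" by auto
  qed
  then show ?thesis by simp
qed


lemma exp_le_five_thirds:
  fixes x :: real
  assumes "0 \<le> x" "x < 2"
  shows "exp x \<le> 5 / 3 * (4 - x) / (2 - x)\<^sup>2"
proof (cases "x \<le> 8 / 5")
  case True
  have "exp x = (exp (x / 2))\<^sup>2"
    by (simp add: power2_eq_square exp_add[symmetric])
  also have "\<dots> \<le> (1 / (1 - x / 2))\<^sup>2"
    using exp_le_inverse_one_minus[of "x / 2"] assms by (intro power_mono) auto
  also have "\<dots> = 4 / (2 - x)\<^sup>2"
    using assms by (simp add: field_simps)
  also have "\<dots> \<le> 5 / 3 * (4 - x) / (2 - x)\<^sup>2"
    using True assms by (intro divide_right_mono) auto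
  finally show ?thesis .
next
  case False
  have "exp x \<le> exp 1 ^ 2"
    using assms by (simp add: exp_of_nat_mult[of 2 1, symmetric])
  also have "\<dots> \<le> 3\<^sup>2"
    using exp_le by (intro power_mono) auto
  also have "\<dots> \<le> 5 / 3 * (4 - x) / (2 - x)\<^sup>2"
  proof -
    have "(2 - x)\<^sup>2 \<le> (2 / 5)\<^sup>2"
      using False assms by (intro power_mono) auto
    then show ?thesis
      using assms by (simp add: pos_le_divide_eq power2_eq_square)
  qed
  finally show ?thesis .
qed

lemma phi_le_Bennett:
  assumes "0 \<le> x" "x < 2"
  shows "phi x \<le> 5 / 3 * x\<^sup>2 / (2 - x)"
proof -
  let ?f = "\<lambda>x. 5 / 3 * x\<^sup>2 / (2 - x) - phi x"
  have "?f 0 \<le> ?f x"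
  proof (rule DERIV_nonneg_imp_nondecreasing[OF assms(1)])
    fix y assume y: "0 \<le> y" "y \<le> x"
    with assms have "y < 2" by simp
    have "DERIV (\<lambda>x. 5 / 3 * x\<^sup>2 / (2 - x)) y :> 5 / 3 * y * (4 - y) / (2 - y)\<^sup>2"
    proof (rule DERIV_cong)
      show "DERIV (\<lambda>x. 5 / 3 * x\<^sup>2 / (2 - x)) y :> (5 / 3 * (2 * y) * (2 - y) - 5 / 3 * y\<^sup>2 * (- 1)) / (2 - y)\<^sup>2"
        using \<open>y < 2\<close> by (auto intro!: derivative_eq_intros simp: field_split_simps power2_eq_square)
    qed (simp add: field_split_simps, simp add: algebra_simps power2_eq_square)
    then have "DERIV ?f y :> 5 / 3 * y * (4 - y) / (2 - y)\<^sup>2 - y * exp y"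
      by (intro derivative_intros DERIV_phi)
    moreover have "y * exp y \<le> 5 / 3 * y * (4 - y) / (2 - y)\<^sup>2"
      using mult_left_mono[OF exp_le_five_thirds[OF y(1) \<open>y < 2\<close>] y(1)] by (simp add: algebra_simps)
    ultimately show "\<exists>d. DERIV ?f y :> d \<and> 0 \<le> d" by auto
  qed
  then show ?thesis by simp
qed

lemma mult_exp_minus_one_le:
  fixes u :: real
  shows "u * (exp u - 1) \<le> u\<^sup>2 * (exp u + 1) / 2"
proof -
  let ?f = "\<lambda>u. u * (exp u + 1) / 2 - exp u + 1"
  have mono: "?f x \<le> ?f y" if "x \<le> y" for x y :: real
  proof (rule DERIV_nonneg_imp_nondecreasing[OF that])
    fix z :: real
    have "DERIV ?f z :> ((exp z + 1) + z * exp z) / 2 - exp z"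
      by (auto intro!: derivative_eq_intros)
    moreover note one_minus_mult_exp_le[of z]
    ultimately show "\<exists>d. DERIV ?f z :> d \<and> 0 \<le> d"
      by (auto simp: algebra_simps)
  qed
  \<comment> \<open>\<open>?f\<close> is increasing and vanishes at \<open>0\<close>, so \<open>u * ?f u \<ge> 0\<close>.\<close>
  have "0 \<le> u * ?f u"
    using mono[of 0 u] mono[of u 0] by (cases "u \<ge> 0") (auto intro: mult_nonpos_nonpos)
  then show ?thesis
    by (simp add: field_simps power2_eq_square)
qed

lemma mult_exp_diff_le:
  fixes x y \<theta> :: real
  assumes "\<theta> \<ge> 0"
  shows "(x - y) * (exp (\<theta> * x) - exp (\<theta> * y)) \<le> \<theta> * (x - y)\<^sup>2 * (exp (\<theta> * x) + exp (\<theta> * y)) / 2"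
proof (cases "\<theta> = 0")
  case False
  let ?u = "\<theta> * (x - y)"
  have "exp (\<theta> * x) = exp ?u * exp (\<theta> * y)"
    by (simp add: exp_add[symmetric] algebra_simps)
  moreover have "?u * (exp ?u - 1) * exp (\<theta> * y) \<le> ?u\<^sup>2 * (exp ?u + 1) / 2 * exp (\<theta> * y)"
    using mult_exp_minus_one_le[of ?u] by (rule mult_right_mono) simp
  ultimately have "\<theta> * ((x - y) * (exp (\<theta> * x) - exp (\<theta> * y)))
      \<le> \<theta> * (\<theta> * (x - y)\<^sup>2 * (exp (\<theta> * x) + exp (\<theta> * y)) / 2)"
    by (simp add: algebra_simps power2_eq_square)
  then show ?thesis
    by (rule mult_left_le_imp_le) (use assms False in auto)
qed simp

lemma ln_le_half:
  fixes y :: real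
  assumes "0 < y"
  shows "ln y \<le> y / 2"
proof -
  have "ln y = 2 * ln (sqrt y)"
    using assms by (simp add: ln_sqrt)
  also have "\<dots> \<le> 2 * (sqrt y - 1)"
    using assms ln_le_minus_one[of "sqrt y"] by simp
  also have "\<dots> \<le> y / 2"
    using assms zero_le_power2[of "sqrt y - 2"] by (simp add: power2_eq_square algebra_simps)
  finally show ?thesis .
qed

lemma exp_one_lessD:
  fixes t :: real
  assumes "exp 1 < t"
  shows "1 < t" "1 < ln t"
proof -
  show "1 < t"
    using assms exp_gt_one[of 1] by linarith
  then show "1 < ln t"
    using assms ln_less_cancel_iff[of "exp 1" t] by simp
qed

section \<open>Exchangeable pairs and Chernoff bounds\<close>

lemma exchangeable_pair_bound:
  fixes W D :: "'a \<Rightarrow> real"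
  assumes "bij_betw \<tau> S S" and "\<theta> \<ge> 0"
    and W: "\<And>x. x \<in> S \<Longrightarrow> W (\<tau> x) = W x - D x"
    and D: "\<And>x. x \<in> S \<Longrightarrow> D (\<tau> x) = - D x"
  shows "(\<Sum>x\<in>S. D x * exp (\<theta> * W x)) \<le> \<theta> / 2 * (\<Sum>x\<in>S. (D x)\<^sup>2 * exp (\<theta> * W x))"
proof -
  have reindex: "(\<Sum>x\<in>S. g (\<tau> x)) = (\<Sum>x\<in>S. g x)" for g :: "'a \<Rightarrow> real"
    by (rule sum.reindex_bij_betw[OF assms(1)])
  let ?e = "\<lambda>x. exp (\<theta> * (W x - D x))"
  have flip: "(\<Sum>x\<in>S. D x * exp (\<theta> * W x)) = - (\<Sum>x\<in>S. D x * ?e x)"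
    using reindex[of "\<lambda>x. D x * exp (\<theta> * W x)"] by (simp add: W D sum_negf)
  have same: "(\<Sum>x\<in>S. (D x)\<^sup>2 * ?e x) = (\<Sum>x\<in>S. (D x)\<^sup>2 * exp (\<theta> * W x))"
    using reindex[of "\<lambda>x. (D x)\<^sup>2 * exp (\<theta> * W x)"] by (simp add: W D)
  have "2 * (\<Sum>x\<in>S. D x * exp (\<theta> * W x))
      = (\<Sum>x\<in>S. (W x - (W x - D x)) * (exp (\<theta> * W x) - ?e x))"
    using flip by (simp add: sum_subtractf algebra_simps)
  also have "\<dots> \<le> (\<Sum>x\<in>S. \<theta> * (W x - (W x - D x))\<^sup>2 * (exp (\<theta> * W x) + ?e x) / 2)"
    by (intro sum_mono mult_exp_diff_le assms(2))
  also have "\<dots> = (\<Sum>x\<in>S. \<theta> / 2 * ((D x)\<^sup>2 * exp (\<theta> * W x)) + \<theta> / 2 * ((D x)\<^sup>2 * ?e x))"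
    by (intro sum.cong) (simp_all add: algebra_simps)
  also have "\<dots> = \<theta> / 2 * ((\<Sum>x\<in>S. (D x)\<^sup>2 * exp (\<theta> * W x)) + (\<Sum>x\<in>S. (D x)\<^sup>2 * ?e x))"
    by (simp only: sum.distrib distrib_left sum_distrib_left)
  finally show ?thesis
    unfolding same by simp
qed

lemma sum_exp_le_of_derivative_bound:
  fixes W :: "'a \<Rightarrow> real"
  assumes "finite S" "c \<noteq> 0" "\<theta> \<ge> 0"
    and deriv: "\<And>s. 0 \<le> s \<Longrightarrow>
      (\<Sum>x\<in>S. W x * exp (s * W x)) \<le> v * s * exp (c * s) * (\<Sum>x\<in>S. exp (s * W x))"
  shows "(\<Sum>x\<in>S. exp (\<theta> * W x)) \<le> card S * exp (v * phi (c * \<theta>) / c\<^sup>2)"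
proof -
  define Z where "Z s = (\<Sum>x\<in>S. exp (s * W x))" for s
  define E where "E s = exp (- (v * phi (c * s) / c\<^sup>2))" for s
  \<comment> \<open>\<open>phi (c s) / c\<^sup>2\<close> is the primitive of \<open>s e\<^sup>c\<^sup>s\<close> vanishing at \<open>0\<close>, so \<open>Z \<cdot> E\<close> is non-increasing.\<close>
  have dZ: "DERIV Z s :> (\<Sum>x\<in>S. W x * exp (s * W x))" for s
    unfolding Z_def[abs_def] using assms(1) by (auto intro!: derivative_eq_intros simp: mult.commute)
  have dE: "DERIV E s :> - (v * s * exp (c * s)) * E s" for s
    unfolding E_def[abs_def] phi_def using assms(2)
    by (auto intro!: derivative_eq_intros simp: field_simps power2_eq_square)
  have "Z \<theta> * E \<theta> \<le> Z 0 * E 0"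
  proof (rule DERIV_nonpos_imp_nonincreasing[OF assms(3)])
    fix s :: real assume "0 \<le> s"
    have "DERIV (\<lambda>s. Z s * E s) s
        :> E s * ((\<Sum>x\<in>S. W x * exp (s * W x)) - v * s * exp (c * s) * Z s)"
      by (rule DERIV_cong[OF DERIV_mult[OF dZ dE]]) (simp add: algebra_simps)
    moreover have "E s * ((\<Sum>x\<in>S. W x * exp (s * W x)) - v * s * exp (c * s) * Z s) \<le> 0"
      using deriv[OF \<open>0 \<le> s\<close>] by (intro mult_nonneg_nonpos) (auto simp: E_def Z_def)
    ultimately show "\<exists>d. DERIV (\<lambda>s. Z s * E s) s :> d \<and> d \<le> 0" by blast
  qed
  then show ?thesis
    by (simp add: Z_def E_def exp_minus field_simps)
qed

lemma prob_pmf_of_set_ge_le: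
  fixes W :: "'a \<Rightarrow> real"
  assumes "finite S" "S \<noteq> {}" "\<theta> \<ge> 0"
  shows "measure_pmf.prob (pmf_of_set S) {x. t \<le> W x}
    \<le> exp (- (\<theta> * t)) * (\<Sum>x\<in>S. exp (\<theta> * W x)) / card S"
proof -
  let ?A = "S \<inter> {x. t \<le> W x}"
  have "real (card ?A) = (\<Sum>x\<in>?A. 1)"
    by simp
  also have "\<dots> \<le> (\<Sum>x\<in>?A. exp (\<theta> * (W x - t)))"
    using assms(3) by (intro sum_mono) auto
  also have "\<dots> \<le> (\<Sum>x\<in>S. exp (\<theta> * (W x - t)))"
    using assms(1) by (intro sum_mono2) auto
  also have "\<dots> = exp (- (\<theta> * t)) * (\<Sum>x\<in>S. exp (\<theta> * W x))"
    by (simp add: sum_distrib_left exp_add[symmetric] algebra_simps)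
  finally show ?thesis
    using assms by (simp add: measure_pmf_of_set divide_right_mono)
qed

lemma chernoff_exponent_le:
  assumes "v > 0" "c > 0" "t \<ge> 0" "b > 0" "k > 0"
    and phi_le: "\<And>x. 0 \<le> x \<Longrightarrow> x < k \<Longrightarrow> phi x \<le> b * x\<^sup>2 / (k - x)"
  shows "\<exists>\<theta>\<ge>0. v * phi (c * \<theta>) / c\<^sup>2 - \<theta> * t \<le> - (k * t\<^sup>2 / (2 * (2 * b * v + c * t)))"
proof (intro exI conjI)
  let ?D = "2 * b * v + c * t"
  define \<theta> where "\<theta> = k * t / ?D"
  have "?D > 0"
    using assms by (simp add: add_pos_nonneg)
  then show "0 \<le> \<theta>"
    using assms by (simp add: \<theta>_def)
  have k_minus: "k - c * \<theta> = 2 * b * v * k / ?D"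
    using \<open>?D > 0\<close> by (simp add: \<theta>_def field_simps)
  moreover have "2 * b * v * k / ?D > 0"
    using assms \<open>?D > 0\<close> by simp
  ultimately have "v * phi (c * \<theta>) / c\<^sup>2 \<le> v * (b * (c * \<theta>)\<^sup>2 / (k - c * \<theta>)) / c\<^sup>2"
    using assms(1,2) \<open>0 \<le> \<theta>\<close> by (intro divide_right_mono mult_left_mono phi_le) auto
  also have "\<dots> = \<theta> * (\<theta> * ?D) / (2 * k)"
    unfolding k_minus using assms(1,2,4,5) \<open>?D > 0\<close> by (simp add: field_simps power2_eq_square)
  also have "\<dots> = \<theta> * t / 2"
    using assms(5) \<open>?D > 0\<close> by (simp add: \<theta>_def)
  finally have "v * phi (c * \<theta>) / c\<^sup>2 \<le> \<theta> * t / 2" .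
  moreover have "\<theta> * t / 2 = k * t\<^sup>2 / (2 * ?D)"
    by (simp add: \<theta>_def power2_eq_square algebra_simps)
  ultimately show "v * phi (c * \<theta>) / c\<^sup>2 - \<theta> * t \<le> - (k * t\<^sup>2 / (2 * ?D))"
    by linarith
qed

lemma chernoff_exponent_le_Bernstein:
  assumes "v > 0" "c > 0" "t \<ge> 0"
  shows "\<exists>\<theta>\<ge>0. v * phi (c * \<theta>) / c\<^sup>2 - \<theta> * t \<le> - (t\<^sup>2 / (2 * (v + c * t)))"
proof -
  have "phi x \<le> 1 / 2 * x\<^sup>2 / (1 - x)" if "0 \<le> x" "x < 1" for x
    using phi_le_Bernstein[OF that] by simp
  from chernoff_exponent_le[OF assms _ _ this] show ?thesis
    by simp
qed

lemma chernoff_exponent_le_Bennett: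
  assumes "v > 0" "c > 0" "t \<ge> 0"
  shows "\<exists>\<theta>\<ge>0. v * phi (c * \<theta>) / c\<^sup>2 - \<theta> * t \<le> - (t\<^sup>2 / (10 * v / 3 + c * t))"
  using chernoff_exponent_le[OF assms _ _ phi_le_Bennett]
  by (simp only: mult_divide_mult_cancel_left_if) simp

lemma chernoff_exponent_le_log:
  fixes v c t :: real
  assumes "v \<ge> 0" "c > 0" "t > exp 1"
  shows "\<exists>\<theta>\<ge>0. v * phi (c * \<theta>) / c\<^sup>2 - \<theta> * t \<le> - (t / c) * (ln t - ln (ln t) - v / c)"
proof (intro exI conjI)
  define \<theta> where "\<theta> = (ln t - ln (ln t)) / c"
  have "t > 1" "ln t > 1" "t > 0"
    using exp_one_lessD[OF assms(3)] by simp_all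
  then have "ln (ln t) \<le> ln t / 2"
    by (intro ln_le_half) simp
  with \<open>ln t > 1\<close> assms(2) show "0 \<le> \<theta>"
    by (simp add: \<theta>_def)
  have "c * \<theta> = ln t - ln (ln t)"
    using assms(2) by (simp add: \<theta>_def)
  moreover have "exp (ln t - ln (ln t)) = t / ln t"
    using \<open>t > 1\<close> \<open>ln t > 1\<close> by (simp add: exp_diff)
  ultimately have "phi (c * \<theta>) = t / ln t * (ln t - ln (ln t) - 1) + 1"
    by (simp add: phi_def)
  also have "\<dots> \<le> t / ln t * (ln t - 1) + 1"
    using \<open>t > 1\<close> \<open>ln t > 1\<close> by (intro add_right_mono mult_left_mono) (auto intro!: divide_nonneg_pos)
  also have "\<dots> \<le> t"
    using \<open>t > 0\<close> \<open>ln t > 1\<close> ln_le_minus_one[of t] by (simp add: field_simps)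
  finally have "v * phi (c * \<theta>) / c\<^sup>2 \<le> v * t / c\<^sup>2"
    using assms(1) by (intro divide_right_mono mult_left_mono) auto
  moreover have "- (t / c) * (ln t - ln (ln t) - v / c) = v * t / c\<^sup>2 - \<theta> * t"
    using assms(2) by (simp add: \<theta>_def field_simps power2_eq_square)
  ultimately show "v * phi (c * \<theta>) / c\<^sup>2 - \<theta> * t \<le> - (t / c) * (ln t - ln (ln t) - v / c)"
    by linarith
qed

lemma exp_log_tail_le_half_log:
  fixes v c t :: real
  assumes "c > 0" "t > exp 1"
  shows "exp (- (t / c) * (ln t - ln (ln t) - v / c)) \<le> exp (- (t / (2 * c)) * (ln t - 2 * v / c))"
proof -
  have "t > 1" "ln t > 1" "t > 0"
    using exp_one_lessD[OF assms(2)] by simp_all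
  then have "ln (ln t) \<le> ln t / 2"
    using \<open>t > 1\<close> by (intro ln_le_half) simp
  then have "0 \<le> t / c * (ln t / 2 - ln (ln t))"
    using \<open>t > 0\<close> assms(1) by simp
  moreover have "- (t / c) * (ln t - ln (ln t) - v / c)
      = - (t / (2 * c)) * (ln t - 2 * v / c) - t / c * (ln t / 2 - ln (ln t))"
    using assms(1) by (simp add: field_simps)
  ultimately show ?thesis
    by simp
qed

section \<open>The permutation statistic\<close>

definition swap_gain :: "(nat \<Rightarrow> nat \<Rightarrow> real) \<Rightarrow> nat \<Rightarrow> nat \<Rightarrow> nat \<Rightarrow> nat \<Rightarrow> real" where
  "swap_gain a i j k l = a i k + a j l - a i l - a j k"

definition perm_dev :: "nat \<Rightarrow> (nat \<Rightarrow> nat \<Rightarrow> real) \<Rightarrow> (nat \<Rightarrow> nat) \<Rightarrow> real" where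
  "perm_dev n a \<pi> = perm_stat n a \<pi> - mu_A n a"

lemma swap_gain_same_row [simp]: "swap_gain a i i k l = 0"
  by (simp add: swap_gain_def)

lemma perm_stat_compose_transpose:
  assumes "i \<in> {1..n}" "j \<in> {1..n}"
  shows "perm_stat n a (\<pi> \<circ> Transposition.transpose i j)
    = perm_stat n a \<pi> - swap_gain a i j (\<pi> i) (\<pi> j)"
proof (cases "i = j")
  case False
  let ?d = "\<lambda>x. a x (\<pi> (Transposition.transpose i j x)) - a x (\<pi> x)"
  have "perm_stat n a (\<pi> \<circ> Transposition.transpose i j) - perm_stat n a \<pi> = (\<Sum>x=1..n. ?d x)"
    by (simp add: perm_stat_def sum_subtractf)
  also have "\<dots> = (\<Sum>x\<in>{i, j}. ?d x)"
    using assms by (intro sum.mono_neutral_right) auto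
  also have "\<dots> = - swap_gain a i j (\<pi> i) (\<pi> j)"
    using False by (simp add: swap_gain_def)
  finally show ?thesis
    by simp
qed simp

lemma of_nat_mult_mu_A: "n > 0 \<Longrightarrow> real n * mu_A n a = (\<Sum>i=1..n. \<Sum>j=1..n. a i j)"
  by (simp add: mu_A_def tot_mean_def power2_eq_square)

lemma sum_swap_gain:
  assumes "\<pi> permutes {1..n}" "n > 0"
  shows "(\<Sum>i=1..n. \<Sum>j=1..n. swap_gain a i j (\<pi> i) (\<pi> j)) = 2 * real n * perm_dev n a \<pi>"
proof -
  have row: "(\<Sum>j=1..n. a i (\<pi> j)) = (\<Sum>k=1..n. a i k)" for i
    using sum.permute[OF assms(1), of "a i"] by (simp add: o_def)
  have "(\<Sum>i=1..n. \<Sum>j=1..n. swap_gain a i j (\<pi> i) (\<pi> j))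
      = 2 * real n * perm_stat n a \<pi> - (\<Sum>i=1..n. \<Sum>j=1..n. a i (\<pi> j)) - (\<Sum>j=1..n. \<Sum>i=1..n. a i (\<pi> j))"
    by (simp add: swap_gain_def sum.distrib sum_subtractf perm_stat_def sum_distrib_left mult.assoc)
  also have "\<dots> = 2 * real n * perm_stat n a \<pi> - 2 * (\<Sum>i=1..n. \<Sum>k=1..n. a i k)"
    by (subst (2) sum.swap) (simp only: row mult_2)
  finally show ?thesis
    using of_nat_mult_mu_A[OF assms(2), of a] by (simp add: perm_dev_def algebra_simps)
qed

lemma abs_le_norm_A:
  assumes "i \<in> {1..n}" "j \<in> {1..n}"
  shows "\<bar>a i j - row_mean n a i\<bar> \<le> norm_A n a"
proof -
  have "finite {\<bar>a i j - row_mean n a i\<bar> | i j. i \<in> {1..n} \<and> j \<in> {1..n}}"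
    by (rule finite_subset[of _ "(\<lambda>(i, j). \<bar>a i j - row_mean n a i\<bar>) ` ({1..n} \<times> {1..n})"]) auto
  then show ?thesis
    unfolding norm_A_def using assms by (intro Max_ge) auto
qed

lemma abs_perm_stat_compose_diff_le:
  assumes "\<pi> permutes {1..n}" "\<sigma> permutes {1..n}" "n \<ge> 1"
    and "finite F" "\<And>y. y \<notin> F \<Longrightarrow> \<sigma> y = y"
  shows "\<bar>perm_stat n a (\<sigma> \<circ> \<pi>) - perm_stat n a \<pi>\<bar> \<le> 2 * real (card F) * norm_A n a"
proof -
  let ?X = "{x \<in> {1..n}. \<pi> x \<in> F}"
  have "card ?X \<le> card F"
    using assms(4) by (intro card_inj_on_le[of \<pi>] inj_on_subset[OF permutes_inj_on[OF assms(1)]]) auto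
  moreover have "0 \<le> norm_A n a"
    using abs_le_norm_A[of 1 n 1 a] assms(3) by auto
  moreover have "\<bar>perm_stat n a (\<sigma> \<circ> \<pi>) - perm_stat n a \<pi>\<bar> \<le> 2 * real (card ?X) * norm_A n a"
  proof -
    have "perm_stat n a (\<sigma> \<circ> \<pi>) - perm_stat n a \<pi> = (\<Sum>x\<in>?X. a x (\<sigma> (\<pi> x)) - a x (\<pi> x))"
      unfolding perm_stat_def sum_subtractf[symmetric] o_def using assms(5)
      by (intro sum.mono_neutral_right) auto
    also have "\<bar>\<dots>\<bar> \<le> (\<Sum>x\<in>?X. 2 * norm_A n a)"
    proof (rule order_trans[OF sum_abs sum_mono])
      fix x assume "x \<in> ?X"
      then have "\<pi> x \<in> {1..n}" "\<sigma> (\<pi> x) \<in> {1..n}" "x \<in> {1..n}"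
        using permutes_in_image[OF assms(1)] permutes_in_image[OF assms(2)] by auto
      then show "\<bar>a x (\<sigma> (\<pi> x)) - a x (\<pi> x)\<bar> \<le> 2 * norm_A n a"
        using abs_le_norm_A[of x n "\<pi> x" a] abs_le_norm_A[of x n "\<sigma> (\<pi> x)" a] by linarith
    qed
    finally show ?thesis
      by simp
  qed
  ultimately show ?thesis
    by (smt (verit) mult_right_mono of_nat_mono)
qed

definition off_diagonal :: "nat \<Rightarrow> (nat \<times> nat) set" where
  "off_diagonal n = {(k, l). k \<in> {1..n} \<and> l \<in> {1..n} \<and> k \<noteq> l}"

definition perm_fiber :: "nat \<Rightarrow> nat \<Rightarrow> nat \<Rightarrow> nat \<times> nat \<Rightarrow> (nat \<Rightarrow> nat) set" where
  "perm_fiber n i j kl = {\<pi> \<in> {\<pi>. \<pi> permutes {1..n}}. (\<pi> i, \<pi> j) = kl}"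

lemma finite_off_diagonal: "finite (off_diagonal n)"
  by (rule finite_subset[of _ "{1..n} \<times> {1..n}"]) (auto simp: off_diagonal_def)

lemma card_off_diagonal: "card (off_diagonal n) = n * (n - 1)"
proof -
  have "off_diagonal n = Sigma {1..n} (\<lambda>k. {1..n} - {k})"
    by (auto simp: off_diagonal_def)
  then show ?thesis
    by (simp add: card_SigmaI)
qed

lemma sum_perm_fibers:
  assumes "i \<in> {1..n}" "j \<in> {1..n}" "i \<noteq> j"
  shows "(\<Sum>kl\<in>off_diagonal n. \<Sum>\<pi>\<in>perm_fiber n i j kl. h \<pi>) = (\<Sum>\<pi>\<in>{\<pi>. \<pi> permutes {1..n}}. (h \<pi> :: real))"
  unfolding perm_fiber_def
proof (rule sum.group)
  show "finite {\<pi>. \<pi> permutes {1..n}}"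
    by (simp add: finite_permutations)
  show "finite (off_diagonal n)"
    by (rule finite_off_diagonal)
  show "(\<lambda>\<pi>. (\<pi> i, \<pi> j)) ` {\<pi>. \<pi> permutes {1..n}} \<subseteq> off_diagonal n"
  proof (intro image_subsetI)
    fix \<pi> assume "\<pi> \<in> {\<pi>. \<pi> permutes {1..n}}"
    then have "\<pi> permutes {1..n}" by simp
    then have "\<pi> i \<in> {1..n}" "\<pi> j \<in> {1..n}" "\<pi> i \<noteq> \<pi> j"
      using assms permutes_in_image[of \<pi> "{1..n}"] permutes_inj[of \<pi> "{1..n}"]
      by (simp_all add: inj_eq)
    then show "(\<pi> i, \<pi> j) \<in> off_diagonal n"
      by (simp add: off_diagonal_def)
  qed
qed

lemma card_insert4_le: "card {w, x, y, z} \<le> 4"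
  using card_length[of "[w, x, y, z]"] by simp

lemma permutes_map_pair:
  assumes "(k, l) \<in> off_diagonal n" "(k', l') \<in> off_diagonal n"
  obtains \<sigma> where "\<sigma> permutes {1..n}" "\<sigma> k = k'" "\<sigma> l = l'" "\<And>y. y \<notin> {k, k', l, l'} \<Longrightarrow> \<sigma> y = y"
proof
  let ?\<sigma> = "Transposition.transpose (Transposition.transpose k k' l) l' \<circ> Transposition.transpose k k'"
  have kl: "k \<in> {1..n}" "l \<in> {1..n}" "k \<noteq> l" "k' \<in> {1..n}" "l' \<in> {1..n}" "k' \<noteq> l'"
    using assms by (auto simp: off_diagonal_def)
  then show "?\<sigma> permutes {1..n}"
    by (intro permutes_compose permutes_swap_id) (auto simp: Transposition.transpose_def)
  show "?\<sigma> k = k'" "?\<sigma> l = l'" "\<And>y. y \<notin> {k, k', l, l'} \<Longrightarrow> ?\<sigma> y = y"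
    using kl by (auto simp: Transposition.transpose_def)
qed

lemma sum_perm_fiber_exp_le:
  assumes "n \<ge> 1" "\<theta> \<ge> 0" "(k, l) \<in> off_diagonal n" "(k', l') \<in> off_diagonal n"
  shows "(\<Sum>\<pi>\<in>perm_fiber n i j (k, l). exp (\<theta> * perm_dev n a \<pi>))
    \<le> exp (8 * norm_A n a * \<theta>) * (\<Sum>\<pi>\<in>perm_fiber n i j (k', l'). exp (\<theta> * perm_dev n a \<pi>))"
proof -
  obtain \<sigma> where \<sigma>: "\<sigma> permutes {1..n}" and \<sigma>_kl: "\<sigma> k = k'" "\<sigma> l = l'"
    and \<sigma>_fixes: "\<And>y. y \<notin> {k, k', l, l'} \<Longrightarrow> \<sigma> y = y"
    using permutes_map_pair[OF assms(3,4)] by blast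
  let ?e = "\<lambda>\<pi>. exp (\<theta> * perm_dev n a \<pi>)"
  let ?E = "exp (8 * norm_A n a * \<theta>)"
  \<comment> \<open>\<open>(\<circ>) \<sigma>\<close> maps the first fibre injectively into the second and moves \<open>Y\<close> by at most \<open>8\<parallel>a\<parallel>\<close>.\<close>
  have "(\<Sum>\<pi>\<in>perm_fiber n i j (k, l). ?e \<pi>) \<le> (\<Sum>\<pi>\<in>perm_fiber n i j (k, l). ?E * ?e (\<sigma> \<circ> \<pi>))"
  proof (rule sum_mono)
    fix \<pi> assume "\<pi> \<in> perm_fiber n i j (k, l)"
    then have "\<bar>perm_stat n a (\<sigma> \<circ> \<pi>) - perm_stat n a \<pi>\<bar> \<le> 2 * real (card {k, k', l, l'}) * norm_A n a"
      using \<sigma> \<sigma>_fixes assms(1) by (intro abs_perm_stat_compose_diff_le) (auto simp: perm_fiber_def)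
    also have "\<dots> \<le> 2 * 4 * norm_A n a"
      using card_insert4_le[of k k' l l'] abs_le_norm_A[of 1 n 1 a] assms(1)
      by (intro mult_right_mono mult_left_mono) auto
    finally have "perm_dev n a \<pi> \<le> 8 * norm_A n a + perm_dev n a (\<sigma> \<circ> \<pi>)"
      by (simp add: perm_dev_def)
    from mult_left_mono[OF this assms(2)]
    have "\<theta> * perm_dev n a \<pi> \<le> 8 * norm_A n a * \<theta> + \<theta> * perm_dev n a (\<sigma> \<circ> \<pi>)"
      by (simp add: algebra_simps)
    then show "?e \<pi> \<le> ?E * ?e (\<sigma> \<circ> \<pi>)"
      by (simp add: exp_add[symmetric])
  qed
  also have "\<dots> = ?E * (\<Sum>\<pi>\<in>(\<circ>) \<sigma> ` perm_fiber n i j (k, l). ?e \<pi>)"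
  proof -
    have "inj ((\<circ>) \<sigma>)"
      using permutes_inj[OF \<sigma>] by (auto simp: inj_def fun_eq_iff)
    then have "inj_on ((\<circ>) \<sigma>) (perm_fiber n i j (k, l))"
      by (rule inj_on_subset) simp
    then show ?thesis
      by (simp add: sum.reindex sum_distrib_left)
  qed
  also have "\<dots> \<le> ?E * (\<Sum>\<pi>\<in>perm_fiber n i j (k', l'). ?e \<pi>)"
    using \<sigma> \<sigma>_kl
    by (intro mult_left_mono sum_mono2) (auto simp: perm_fiber_def finite_permutations permutes_compose)
  finally show ?thesis .
qed

lemma card_mult_sum_perm_fiber_exp_le:
  assumes "n \<ge> 1" "\<theta> \<ge> 0" "i \<in> {1..n}" "j \<in> {1..n}" "i \<noteq> j" "kl \<in> off_diagonal n"
  shows "real (n * (n - 1)) * (\<Sum>\<pi>\<in>perm_fiber n i j kl. exp (\<theta> * perm_dev n a \<pi>))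
    \<le> exp (8 * norm_A n a * \<theta>) * (\<Sum>\<pi>\<in>{\<pi>. \<pi> permutes {1..n}}. exp (\<theta> * perm_dev n a \<pi>))"
proof -
  let ?F = "\<lambda>kl. \<Sum>\<pi>\<in>perm_fiber n i j kl. exp (\<theta> * perm_dev n a \<pi>)"
  have "real (n * (n - 1)) * ?F kl = (\<Sum>kl'\<in>off_diagonal n. ?F kl)"
    by (simp add: card_off_diagonal)
  also have "\<dots> \<le> (\<Sum>kl'\<in>off_diagonal n. exp (8 * norm_A n a * \<theta>) * ?F kl')"
  proof (rule sum_mono)
    fix kl' assume "kl' \<in> off_diagonal n"
    then show "?F kl \<le> exp (8 * norm_A n a * \<theta>) * ?F kl'"
      using assms(1,2,6) sum_perm_fiber_exp_le[where k = "fst kl" and l = "snd kl" and k' = "fst kl'" and l' = "snd kl'"]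
      by simp
  qed
  also have "\<dots> = exp (8 * norm_A n a * \<theta>) * (\<Sum>\<pi>\<in>{\<pi>. \<pi> permutes {1..n}}. exp (\<theta> * perm_dev n a \<pi>))"
    by (simp add: sum_distrib_left[symmetric] sum_perm_fibers[OF assms(3-5)])
  finally show ?thesis .
qed

lemma sum_swap_gain_sq_exp_le:
  assumes "n \<ge> 1" "\<theta> \<ge> 0" "i \<in> {1..n}" "j \<in> {1..n}"
  shows "real (n * (n - 1)) * (\<Sum>\<pi>\<in>{\<pi>. \<pi> permutes {1..n}}. (swap_gain a i j (\<pi> i) (\<pi> j))\<^sup>2 * exp (\<theta> * perm_dev n a \<pi>))
    \<le> exp (8 * norm_A n a * \<theta>) * (\<Sum>\<pi>\<in>{\<pi>. \<pi> permutes {1..n}}. exp (\<theta> * perm_dev n a \<pi>))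
      * (\<Sum>k=1..n. \<Sum>l=1..n. (swap_gain a i j k l)\<^sup>2)"
proof (cases "i = j")
  case False
  let ?e = "\<lambda>\<pi>. exp (\<theta> * perm_dev n a \<pi>)"
  let ?M = "exp (8 * norm_A n a * \<theta>) * (\<Sum>\<pi>\<in>{\<pi>. \<pi> permutes {1..n}}. ?e \<pi>)"
  let ?G = "\<lambda>kl. (swap_gain a i j (fst kl) (snd kl))\<^sup>2"
  have "real (n * (n - 1)) * (\<Sum>\<pi>\<in>{\<pi>. \<pi> permutes {1..n}}. (swap_gain a i j (\<pi> i) (\<pi> j))\<^sup>2 * ?e \<pi>)
      = (\<Sum>kl\<in>off_diagonal n. ?G kl * (real (n * (n - 1)) * (\<Sum>\<pi>\<in>perm_fiber n i j kl. ?e \<pi>)))"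
    unfolding sum_perm_fibers[OF assms(3,4) False, symmetric] sum_distrib_left
    by (intro sum.cong refl) (auto simp: perm_fiber_def algebra_simps)
  also have "\<dots> \<le> (\<Sum>kl\<in>off_diagonal n. ?G kl * ?M)"
    using assms False by (intro sum_mono mult_left_mono card_mult_sum_perm_fiber_exp_le) auto
  also have "\<dots> \<le> (\<Sum>kl\<in>{1..n} \<times> {1..n}. ?G kl) * ?M"
    unfolding sum_distrib_right[symmetric]
    by (intro mult_right_mono sum_mono2) (auto simp: off_diagonal_def intro!: sum_nonneg mult_nonneg_nonneg)
  finally show ?thesis
    by (simp add: sum.cartesian_product case_prod_beta mult.commute)
qed (simp add: sum_nonneg)

lemma sum_sum_square_diff:
  fixes z :: "'a \<Rightarrow> real"
  assumes "finite K" "K \<noteq> {}"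
  shows "(\<Sum>k\<in>K. \<Sum>l\<in>K. (z k - z l)\<^sup>2) = 2 * real (card K) * (\<Sum>k\<in>K. (z k - (\<Sum>x\<in>K. z x) / card K)\<^sup>2)"
proof -
  let ?N = "real (card K)" and ?s = "\<Sum>x\<in>K. z x" and ?q = "\<Sum>x\<in>K. (z x)\<^sup>2"
  have "?N > 0"
    using assms by (simp add: card_gt_0_iff)
  have "(\<Sum>k\<in>K. \<Sum>l\<in>K. (z k - z l)\<^sup>2) = (\<Sum>k\<in>K. \<Sum>l\<in>K. (z k)\<^sup>2 + (z l)\<^sup>2 - 2 * z k * z l)"
    by (simp add: power2_eq_square algebra_simps)
  also have "\<dots> = 2 * ?N * ?q - 2 * ?s\<^sup>2"
    by (simp add: sum.distrib sum_subtractf sum_distrib_left[symmetric] sum_distrib_right[symmetric]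
        power2_eq_square algebra_simps) (simp add: sum_distrib_left algebra_simps)
  also have "\<dots> = 2 * ?N * (?q - ?s\<^sup>2 / ?N)"
    using \<open>?N > 0\<close> by (simp add: field_simps)
  also have "?q - ?s\<^sup>2 / ?N = ?q - 2 * (?s / ?N) * ?s + ?N * (?s / ?N)\<^sup>2"
    using \<open>?N > 0\<close> by (simp add: field_simps power2_eq_square)
  also have "\<dots> = (\<Sum>k\<in>K. (z k)\<^sup>2 - 2 * (?s / ?N) * z k + (?s / ?N)\<^sup>2)"
    by (simp add: sum.distrib sum_subtractf sum_distrib_left)
  also have "\<dots> = (\<Sum>k\<in>K. (z k - ?s / ?N)\<^sup>2)"
    by (simp add: power2_eq_square algebra_simps)
  finally show ?thesis .
qed

lemma sum_sq_swap_gain_cols: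
  assumes "n \<ge> 1"
  shows "(\<Sum>k=1..n. \<Sum>l=1..n. (swap_gain a i j k l)\<^sup>2)
    = 2 * real n * (\<Sum>k=1..n. ((a i k - row_mean n a i) - (a j k - row_mean n a j))\<^sup>2)"
proof -
  let ?z = "\<lambda>k. a i k - a j k"
  have "(\<Sum>k=1..n. \<Sum>l=1..n. (swap_gain a i j k l)\<^sup>2) = (\<Sum>k=1..n. \<Sum>l=1..n. (?z k - ?z l)\<^sup>2)"
    by (simp add: swap_gain_def algebra_simps)
  also have "\<dots> = 2 * real n * (\<Sum>k=1..n. (?z k - (\<Sum>x=1..n. ?z x) / real n)\<^sup>2)"
    using sum_sum_square_diff[of "{1..n}" ?z] assms by simp
  also have "(\<Sum>x=1..n. ?z x) / real n = row_mean n a i - row_mean n a j"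
    by (simp add: row_mean_def sum_subtractf diff_divide_distrib)
  finally show ?thesis
    by (simp add: algebra_simps)
qed

lemma sum_sq_centred_rows:
  assumes "n \<ge> 1"
  shows "(\<Sum>i=1..n. \<Sum>j=1..n. ((a i k - row_mean n a i) - (a j k - row_mean n a j))\<^sup>2)
    = 2 * real n * (\<Sum>i=1..n. (a i k - row_mean n a i - col_mean n a k + tot_mean n a)\<^sup>2)"
proof -
  let ?e = "\<lambda>i. a i k - row_mean n a i"
  have "(\<Sum>x=1..n. row_mean n a x) = (\<Sum>x=1..n. \<Sum>y=1..n. a x y) / real n"
    by (simp add: row_mean_def sum_divide_distrib)
  then have mean: "(\<Sum>x=1..n. ?e x) / real n = col_mean n a k - tot_mean n a"
    using assms by (simp add: col_mean_def tot_mean_def sum_subtractf diff_divide_distrib power2_eq_square)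
  have "(\<Sum>i=1..n. \<Sum>j=1..n. (?e i - ?e j)\<^sup>2) = 2 * real n * (\<Sum>i=1..n. (?e i - (\<Sum>x=1..n. ?e x) / real n)\<^sup>2)"
    using sum_sum_square_diff[of "{1..n}" ?e] assms by simp
  then show ?thesis
    unfolding mean by (simp add: algebra_simps)
qed

lemma sum_sq_swap_gain:
  assumes "n \<ge> 2"
  shows "(\<Sum>i=1..n. \<Sum>j=1..n. \<Sum>k=1..n. \<Sum>l=1..n. (swap_gain a i j k l)\<^sup>2)
    = 4 * (real n)\<^sup>2 * (real n - 1) * sigma2_A n a"
proof -
  let ?e = "\<lambda>i k. a i k - row_mean n a i"
  let ?r = "\<lambda>i k. a i k - row_mean n a i - col_mean n a k + tot_mean n a"
  have "(\<Sum>i=1..n. \<Sum>j=1..n. \<Sum>k=1..n. \<Sum>l=1..n. (swap_gain a i j k l)\<^sup>2)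
      = 2 * real n * (\<Sum>i=1..n. \<Sum>j=1..n. \<Sum>k=1..n. (?e i k - ?e j k)\<^sup>2)"
    using assms by (simp only: sum_sq_swap_gain_cols[of n] sum_distrib_left)
  also have "(\<Sum>i=1..n. \<Sum>j=1..n. \<Sum>k=1..n. (?e i k - ?e j k)\<^sup>2)
      = (\<Sum>i=1..n. \<Sum>k=1..n. \<Sum>j=1..n. (?e i k - ?e j k)\<^sup>2)"
    by (rule sum.cong[OF refl], rule sum.swap)
  also have "\<dots> = (\<Sum>k=1..n. \<Sum>i=1..n. \<Sum>j=1..n. (?e i k - ?e j k)\<^sup>2)"
    by (rule sum.swap)
  also have "\<dots> = 2 * real n * (\<Sum>k=1..n. \<Sum>i=1..n. (?r i k)\<^sup>2)"
    using assms by (simp only: sum_sq_centred_rows[of n] sum_distrib_left)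
  also have "(\<Sum>k=1..n. \<Sum>i=1..n. (?r i k)\<^sup>2) = (real n - 1) * sigma2_A n a"
    using assms by (subst sum.swap) (simp add: sigma2_A_def)
  finally show ?thesis
    by (simp add: power2_eq_square algebra_simps)
qed

lemma sum_swap_gain_exp_le:
  assumes "i \<in> {1..n}" "j \<in> {1..n}" "\<theta> \<ge> 0"
  shows "(\<Sum>\<pi>\<in>{\<pi>. \<pi> permutes {1..n}}. swap_gain a i j (\<pi> i) (\<pi> j) * exp (\<theta> * perm_dev n a \<pi>))
    \<le> \<theta> / 2 * (\<Sum>\<pi>\<in>{\<pi>. \<pi> permutes {1..n}}. (swap_gain a i j (\<pi> i) (\<pi> j))\<^sup>2 * exp (\<theta> * perm_dev n a \<pi>))"
proof (rule exchangeable_pair_bound[OF _ assms(3)])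
  let ?t = "Transposition.transpose i j"
  have "?t permutes {1..n}"
    using assms(1,2) by (rule permutes_swap_id)
  then show "bij_betw (\<lambda>\<pi>. \<pi> \<circ> ?t) {\<pi>. \<pi> permutes {1..n}} {\<pi>. \<pi> permutes {1..n}}"
    by (intro bij_betw_byWitness[where f' = "\<lambda>\<pi>. \<pi> \<circ> ?t"])
       (auto simp: comp_assoc intro: permutes_compose)
  show "perm_dev n a (\<pi> \<circ> ?t) = perm_dev n a \<pi> - swap_gain a i j (\<pi> i) (\<pi> j)" for \<pi>
    using perm_stat_compose_transpose[OF assms(1,2)] by (simp add: perm_dev_def)
  show "swap_gain a i j ((\<pi> \<circ> ?t) i) ((\<pi> \<circ> ?t) j) = - swap_gain a i j (\<pi> i) (\<pi> j)" for \<pi>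
    by (simp add: swap_gain_def)
qed

lemma sum_perm_dev_exp_le_swap_gains:
  assumes "n \<ge> 1" "\<theta> \<ge> 0"
  shows "2 * real n * (\<Sum>\<pi>\<in>{\<pi>. \<pi> permutes {1..n}}. perm_dev n a \<pi> * exp (\<theta> * perm_dev n a \<pi>))
    \<le> \<theta> / 2 * (\<Sum>i=1..n. \<Sum>j=1..n. \<Sum>\<pi>\<in>{\<pi>. \<pi> permutes {1..n}}.
          (swap_gain a i j (\<pi> i) (\<pi> j))\<^sup>2 * exp (\<theta> * perm_dev n a \<pi>))"
proof -
  let ?P = "{\<pi>. \<pi> permutes {1..n}}"
  let ?e = "\<lambda>\<pi>. exp (\<theta> * perm_dev n a \<pi>)"
  let ?G = "\<lambda>i j \<pi>. swap_gain a i j (\<pi> i) (\<pi> j)"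
  have "2 * real n * (\<Sum>\<pi>\<in>?P. perm_dev n a \<pi> * ?e \<pi>) = (\<Sum>\<pi>\<in>?P. (2 * real n * perm_dev n a \<pi>) * ?e \<pi>)"
    by (simp add: sum_distrib_left mult.assoc)
  also have "\<dots> = (\<Sum>\<pi>\<in>?P. (\<Sum>i=1..n. \<Sum>j=1..n. ?G i j \<pi>) * ?e \<pi>)"
    using assms(1) by (intro sum.cong refl) (simp only: sum_swap_gain mem_Collect_eq)
  also have "\<dots> = (\<Sum>i=1..n. \<Sum>j=1..n. \<Sum>\<pi>\<in>?P. ?G i j \<pi> * ?e \<pi>)"
    by (simp only: sum_distrib_right) (subst sum.swap, rule sum.cong[OF refl], rule sum.swap)
  also have "\<dots> \<le> (\<Sum>i=1..n. \<Sum>j=1..n. \<theta> / 2 * (\<Sum>\<pi>\<in>?P. (?G i j \<pi>)\<^sup>2 * ?e \<pi>))"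
    using assms(2) by (intro sum_mono sum_swap_gain_exp_le) auto
  finally show ?thesis
    by (simp only: sum_distrib_left)
qed

lemma sum_perm_dev_exp_le:
  assumes "n \<ge> 2" "\<theta> \<ge> 0"
  shows "(\<Sum>\<pi>\<in>{\<pi>. \<pi> permutes {1..n}}. perm_dev n a \<pi> * exp (\<theta> * perm_dev n a \<pi>))
    \<le> sigma2_A n a * \<theta> * exp (8 * norm_A n a * \<theta>) * (\<Sum>\<pi>\<in>{\<pi>. \<pi> permutes {1..n}}. exp (\<theta> * perm_dev n a \<pi>))"
proof -
  let ?P = "{\<pi>. \<pi> permutes {1..n}}"
  let ?e = "\<lambda>\<pi>. exp (\<theta> * perm_dev n a \<pi>)"
  let ?M = "exp (8 * norm_A n a * \<theta>) * (\<Sum>\<pi>\<in>?P. ?e \<pi>)"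
  let ?N = "real (n * (n - 1))"
  have "?N * (2 * real n * (\<Sum>\<pi>\<in>?P. perm_dev n a \<pi> * ?e \<pi>))
      \<le> ?N * (\<theta> / 2 * (\<Sum>i=1..n. \<Sum>j=1..n. \<Sum>\<pi>\<in>?P. (swap_gain a i j (\<pi> i) (\<pi> j))\<^sup>2 * ?e \<pi>))"
    using assms by (intro mult_left_mono sum_perm_dev_exp_le_swap_gains) auto
  also have "\<dots> = \<theta> / 2 * (\<Sum>i=1..n. \<Sum>j=1..n. ?N * (\<Sum>\<pi>\<in>?P. (swap_gain a i j (\<pi> i) (\<pi> j))\<^sup>2 * ?e \<pi>))"
    by (simp only: sum_distrib_left mult.left_commute)
  also have "\<dots> \<le> \<theta> / 2 * (\<Sum>i=1..n. \<Sum>j=1..n. ?M * (\<Sum>k=1..n. \<Sum>l=1..n. (swap_gain a i j k l)\<^sup>2))"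
    using assms by (intro mult_left_mono sum_mono sum_swap_gain_sq_exp_le) auto
  also have "\<dots> = \<theta> / 2 * ?M * (\<Sum>i=1..n. \<Sum>j=1..n. \<Sum>k=1..n. \<Sum>l=1..n. (swap_gain a i j k l)\<^sup>2)"
    by (simp only: sum_distrib_left[symmetric] mult.assoc)
  also have "\<dots> = \<theta> / 2 * ?M * (4 * (real n)\<^sup>2 * (real n - 1) * sigma2_A n a)"
    using assms(1) by (simp only: sum_sq_swap_gain)
  also have "\<dots> = ?N * (2 * real n * (sigma2_A n a * \<theta> * ?M))"
  proof -
    have N: "?N = real n * (real n - 1)"
      using assms(1) by (simp add: of_nat_diff)
    show ?thesis
      unfolding N by (simp add: power2_eq_square field_simps)
  qed
  finally show ?thesis
    using assms(1) by (simp add: mult.assoc)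
qed

section \<open>Concentration\<close>

lemma prob_perm_dev_ge_le:
  assumes "n \<ge> 2" "norm_A n a > 0" "\<theta> \<ge> 0"
  shows "measure_pmf.prob (unif_perm n) {\<pi>. t \<le> perm_dev n a \<pi>}
    \<le> exp (sigma2_A n a * phi (8 * norm_A n a * \<theta>) / (8 * norm_A n a)\<^sup>2 - \<theta> * t)"
proof -
  let ?P = "{\<pi>. \<pi> permutes {1..n}}"
  have P: "finite ?P" "?P \<noteq> {}"
    by (auto simp: finite_permutations intro!: exI[of _ id])
  have "measure_pmf.prob (unif_perm n) {\<pi>. t \<le> perm_dev n a \<pi>}
      \<le> exp (- (\<theta> * t)) * (\<Sum>\<pi>\<in>?P. exp (\<theta> * perm_dev n a \<pi>)) / card ?P"
    unfolding unif_perm_def using P assms(3) by (rule prob_pmf_of_set_ge_le)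
  also have "\<dots> \<le> exp (- (\<theta> * t)) * (card ?P * exp (sigma2_A n a * phi (8 * norm_A n a * \<theta>) / (8 * norm_A n a)\<^sup>2)) / card ?P"
    using P(1) assms sum_perm_dev_exp_le[OF assms(1)]
    by (intro divide_right_mono mult_left_mono sum_exp_le_of_derivative_bound) auto
  also have "\<dots> = exp (sigma2_A n a * phi (8 * norm_A n a * \<theta>) / (8 * norm_A n a)\<^sup>2 - \<theta> * t)"
    using P by (simp add: exp_diff exp_minus field_simps card_gt_0_iff)
  finally show ?thesis .
qed

lemma perm_dev_uminus: "perm_dev n (\<lambda>i j. - a i j) \<pi> = - perm_dev n a \<pi>"
  by (simp add: perm_dev_def perm_stat_def mu_A_def tot_mean_def sum_negf)

lemma sigma2_A_uminus: "sigma2_A n (\<lambda>i j. - a i j) = sigma2_A n a"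
proof -
  have "row_mean n (\<lambda>i j. - a i j) i = - row_mean n a i"
    "col_mean n (\<lambda>i j. - a i j) j = - col_mean n a j"
    "tot_mean n (\<lambda>i j. - a i j) = - tot_mean n a" for i j
    by (simp_all add: row_mean_def col_mean_def tot_mean_def sum_negf)
  then show ?thesis
    unfolding sigma2_A_def by (simp add: power2_eq_square algebra_simps)
qed

lemma norm_A_uminus: "norm_A n (\<lambda>i j. - a i j) = norm_A n a"
proof -
  have "row_mean n (\<lambda>i j. - a i j) i = - row_mean n a i" for i
    by (simp add: row_mean_def sum_negf)
  then show ?thesis
    unfolding norm_A_def by (simp add: abs_minus_commute)
qed

lemma sigma2_A_nonneg: "n \<ge> 2 \<Longrightarrow> sigma2_A n a \<ge> 0"
  unfolding sigma2_A_def by (intro divide_nonneg_pos sum_nonneg) auto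

lemma norm_A_pos:
  assumes "n \<ge> 1" "sigma2_A n a \<noteq> 0"
  shows "norm_A n a > 0"
proof (rule ccontr)
  assume "\<not> norm_A n a > 0"
  then have row_const: "a i j = row_mean n a i" if "i \<in> {1..n}" "j \<in> {1..n}" for i j
    using abs_le_norm_A[OF that, of a] by simp
  have "col_mean n a j = (\<Sum>i=1..n. row_mean n a i) / real n" if "j \<in> {1..n}" for j
    unfolding col_mean_def using that row_const by (intro arg_cong2[where f = "(/)"] sum.cong) auto
  moreover have "tot_mean n a = (\<Sum>i=1..n. row_mean n a i) / real n"
  proof -
    have "(\<Sum>i=1..n. \<Sum>j=1..n. a i j) = (\<Sum>i=1..n. real n * row_mean n a i)"
      using assms(1) by (intro sum.cong) (simp_all add: row_mean_def)
    then show ?thesis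
      unfolding tot_mean_def using assms(1) by (simp add: sum_distrib_left[symmetric] power2_eq_square)
  qed
  ultimately have "sigma2_A n a = 0"
    unfolding sigma2_A_def by (auto simp: row_const intro!: sum.neutral)
  with assms(2) show False
    by simp
qed

lemma prob_perm_dev_two_sided_le:
  assumes "n \<ge> 2" "norm_A n a > 0" "\<theta> \<ge> 0"
  shows "max (measure_pmf.prob (unif_perm n) {\<pi>. perm_stat n a \<pi> - mu_A n a \<ge> t})
             (measure_pmf.prob (unif_perm n) {\<pi>. perm_stat n a \<pi> - mu_A n a \<le> - t})
    \<le> exp (sigma2_A n a * phi (8 * norm_A n a * \<theta>) / (8 * norm_A n a)\<^sup>2 - \<theta> * t)"
proof -
  have "{\<pi>. perm_stat n a \<pi> - mu_A n a \<ge> t} = {\<pi>. t \<le> perm_dev n a \<pi>}"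
    "{\<pi>. perm_stat n a \<pi> - mu_A n a \<le> - t} = {\<pi>. t \<le> perm_dev n (\<lambda>i j. - a i j) \<pi>}"
    by (auto simp: perm_dev_uminus perm_dev_def)
  then show ?thesis
    using prob_perm_dev_ge_le[OF assms(1) _ assms(3), of a t]
      prob_perm_dev_ge_le[OF assms(1) _ assms(3), of "\<lambda>i j. - a i j" t] assms(2)
    by (simp add: sigma2_A_uminus norm_A_uminus)
qed

theorem theorem3p1:
  fixes n :: nat and a :: "nat \<Rightarrow> nat \<Rightarrow> real"
  assumes "n \<ge> 3"
    and "sigma2_A n a \<noteq> 0"
  defines "c \<equiv> 8 * norm_A n a"
    and "P \<equiv> \<lambda>t. max (measure_pmf.prob (unif_perm n) {\<pi>. perm_stat n a \<pi> - mu_A n a \<ge> t})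
                      (measure_pmf.prob (unif_perm n) {\<pi>. perm_stat n a \<pi> - mu_A n a \<le> - t})"
  shows "(\<forall>t\<ge>0. P t \<le> exp (- (t^2 / (2 * (sigma2_A n a + c * t))))
                 \<and> P t \<le> exp (- (t^2 / (10 * sigma2_A n a / 3 + c * t))))
       \<and> (\<forall>t>exp 1. P t \<le> exp (- (t / c) * (ln t - ln (ln t) - sigma2_A n a / c))
                 \<and> exp (- (t / c) * (ln t - ln (ln t) - sigma2_A n a / c))
                     \<le> exp (- (t / (2 * c)) * (ln t - 2 * sigma2_A n a / c)))"
proof -
  let ?v = "sigma2_A n a"
  have n: "n \<ge> 2"
    using assms(1) by simp
  have c: "c > 0"
    using norm_A_pos[of n a] assms(1,2) by (simp add: c_def)
  have v: "?v > 0"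
    using sigma2_A_nonneg[OF n, of a] assms(2) by simp
  have P_le: "P t \<le> exp B" if "\<exists>\<theta>\<ge>0. ?v * phi (c * \<theta>) / c\<^sup>2 - \<theta> * t \<le> B" for t B
  proof -
    from that obtain \<theta> where "\<theta> \<ge> 0" and B: "?v * phi (c * \<theta>) / c\<^sup>2 - \<theta> * t \<le> B"
      by (elim exE conjE)
    have "P t \<le> exp (?v * phi (c * \<theta>) / c\<^sup>2 - \<theta> * t)"
      unfolding P_def c_def using c
      by (intro prob_perm_dev_two_sided_le[OF n _ \<open>\<theta> \<ge> 0\<close>]) (simp add: c_def)
    also have "\<dots> \<le> exp B"
      by (rule exp_mono[OF B])
    finally show ?thesis .
  qed
  show ?thesis
  proof (intro conjI allI impI)
    fix t :: real
    assume "t \<ge> 0"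
    show "P t \<le> exp (- (t\<^sup>2 / (2 * (?v + c * t))))"
      by (rule P_le[OF chernoff_exponent_le_Bernstein[OF v c \<open>t \<ge> 0\<close>]])
    show "P t \<le> exp (- (t\<^sup>2 / (10 * ?v / 3 + c * t)))"
      by (rule P_le[OF chernoff_exponent_le_Bennett[OF v c \<open>t \<ge> 0\<close>]])
  next
    fix t :: real
    assume "t > exp 1"
    show "P t \<le> exp (- (t / c) * (ln t - ln (ln t) - ?v / c))"
      by (rule P_le[OF chernoff_exponent_le_log[OF less_imp_le[OF v] c \<open>t > exp 1\<close>]])
    show "exp (- (t / c) * (ln t - ln (ln t) - ?v / c)) \<le> exp (- (t / (2 * c)) * (ln t - 2 * ?v / c))"
      by (rule exp_log_tail_le_half_log[OF c \<open>t > exp 1\<close>])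
  qed
qed

end
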